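(* Let $1\le d<n$, $r=d(n-d)$. (i) For $\underline i,\underline j\in I(d,n)$, $\underline i\le\underline j$ if and only if $\underline j$ can be obtained from $\underline i$ by applying a suitable monomial in the root operators $f_{s,h}$. (ii) Let $\mathfrak C:\underline i_r>\cdots>\underline i_0$ be a maximal chain in $I(d,n)$. Then for each $t=1,\dots,r$ there exist $s_t,h_t$ with $\underline i_t=f_{s_t,h_t}(\underline i_{t-1})$; moreover each root operator $f_{s,h}$ with $1\le s\le n-1$, $1\le h\le d$, $n-d+h>s\ge h$ appears in the list $(f_{s_t,h_t}\mid t=1,\dots,r)$ exactly once. (iii) If moreover $\underline i_h$ does not contain $n$ for $h=1,\dots,t$ and $\underline i_h$ contains $n$ for all $t<h\le r$, then $\underline i_{t+1}=f_{n-1,d}(\underline i_t)$, i.e. $s_{t+1}=n-1$ and $h_{t+1}=d$.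
   Context: $I(d,n)$ is the set of $d$-element subsets of $\{1,\dots,n\}$ written as increasing sequences $i_1\cdots i_d$, with partial order $\underline i\le\underline j$ iff $i_k\le j_k$ for all $k$. Maximal chains are maximal totally ordered subsets; they have the form $\underline i_r>\cdots>\underline i_0$ from $(n-d+1)\cdots n$ down to $12\cdots d$. For $1\le h\le d$ and $h\le s<n-d+h$, $f_{s,h}$ acts on $I(d,n)\sqcup\{0\}$ by $f_{s,h}(0)=0$, $f_{s,h}(i_1\cdots i_d)=i_1\cdots i_{h-1}(s+1)i_{h+1}\cdots i_d$ if $i_h=s$ and ($h=d$ or $i_{h+1}\ge s+2$), and $0$ otherwise. *)

theory Defs
  imports Main
begin

text \<open>An element i_1 ... i_d of I(d,n) is represented as the strictly increasing
  list [i_1, ..., i_d] (so i_k is xs ! (k-1)).\<close>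

definition Idn :: "nat \<Rightarrow> nat \<Rightarrow> nat list set" where
  "Idn d n = {xs. length xs = d \<and> sorted_wrt (<) xs \<and> set xs \<subseteq> {1..n}}"

definition leI :: "nat list \<Rightarrow> nat list \<Rightarrow> bool" where
  "leI xs ys \<longleftrightarrow> length xs = length ys \<and> (\<forall>k<length xs. xs ! k \<le> ys ! k)"

definition root_valid :: "nat \<Rightarrow> nat \<Rightarrow> nat \<Rightarrow> nat \<Rightarrow> bool" where
  "root_valid d n s h \<longleftrightarrow> 1 \<le> h \<and> h \<le> d \<and> h \<le> s \<and> s < n - d + h"

text \<open>Root operator f_{s,h} on I(d,n) with an extra element 0, here None.\<close>
fun root_op :: "nat \<Rightarrow> nat \<Rightarrow> nat \<Rightarrow> nat list option \<Rightarrow> nat list option" where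
  "root_op d s h None = None"
| "root_op d s h (Some xs) =
     (if xs ! (h - 1) = s \<and> (h = d \<or> xs ! h \<ge> s + 2)
      then Some (xs[h - 1 := s + 1]) else None)"

text \<open>Monomial in root operators, given by the list of its factors (applied right to left).\<close>
fun apply_monomial :: "nat \<Rightarrow> (nat \<times> nat) list \<Rightarrow> nat list option \<Rightarrow> nat list option" where
  "apply_monomial d [] x = x"
| "apply_monomial d ((s, h) # ms) x = root_op d s h (apply_monomial d ms x)"

definition is_chain :: "nat \<Rightarrow> nat \<Rightarrow> nat list set \<Rightarrow> bool" where
  "is_chain d n C \<longleftrightarrow> C \<subseteq> Idn d n \<and> (\<forall>x\<in>C. \<forall>y\<in>C. leI x y \<or> leI y x)"

definition is_maximal_chain :: "nat \<Rightarrow> nat \<Rightarrow> nat list set \<Rightarrow> bool" where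
  "is_maximal_chain d n C \<longleftrightarrow> is_chain d n C \<and> (\<forall>D. is_chain d n D \<and> C \<subseteq> D \<longrightarrow> D = C)"

end

theory Submission
  imports Defs
begin

text \<open>A root operator raises one entry by one, and every raise of a single entry that stays in
  I(d,n) is a root operator. If \<open>i < j\<close>, raising the last entry in which \<open>i\<close> and \<open>j\<close> differ
  stays in I(d,n) and below \<open>j\<close>; iterating gives (i).

  The entry sum is strictly monotone for \<open>\<le>\<close>, and the top element \<open>(n-d+1)\<cdots>n\<close> has entry
  sum exactly \<open>r\<close> more than the bottom element \<open>12\<cdots>d\<close>. Hence a strictly increasing sequence
  \<open>c 0 < \<dots> < c r\<close> in I(d,n) starts at the bottom, ends at the top and raises the sum by one in
  every step, so every step raises a single entry by one, i.e. is a root operator. The \<open>h\<close>-th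
  entry climbs from \<open>h\<close> to \<open>n-d+h\<close> in unit steps and so leaves each value \<open>s\<close> in between
  exactly once, which is (ii); for (iii), the step in which \<open>n\<close> appears raises the last entry
  from \<open>n-1\<close> to \<open>n\<close>.\<close>

definition incr_nth :: "nat list \<Rightarrow> nat \<Rightarrow> nat list" where
  "incr_nth xs k = xs[k := Suc (xs ! k)]"

lemma length_incr_nth [simp]: "length (incr_nth xs k) = length xs"
  by (simp add: incr_nth_def)

lemma nth_incr_nth: "k < length xs \<Longrightarrow> incr_nth xs k ! i = (if i = k then Suc (xs ! k) else xs ! i)"
  by (simp add: incr_nth_def nth_list_update)

lemma sum_list_incr_nth: "k < length xs \<Longrightarrow> sum_list (incr_nth xs k) = Suc (sum_list xs)"
  by (simp add: incr_nth_def sum_list_update)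

lemma Idn_iff_nth:
  "xs \<in> Idn d n \<longleftrightarrow> length xs = d \<and> (\<forall>i j. i < j \<longrightarrow> j < d \<longrightarrow> xs ! i < xs ! j)
     \<and> (\<forall>k<d. 1 \<le> xs ! k \<and> xs ! k \<le> n)"
  unfolding Idn_def sorted_wrt_iff_nth_less by (auto simp: set_conv_nth)

lemma length_Idn: "xs \<in> Idn d n \<Longrightarrow> length xs = d"
  by (simp add: Idn_def)

lemma Idn_nth_range: "xs \<in> Idn d n \<Longrightarrow> k < d \<Longrightarrow> xs ! k \<in> {1..n}"
  unfolding Idn_def using nth_mem by blast

lemma sorted_wrt_less_nth_gap:
  assumes "sorted_wrt (<) (xs :: nat list)" "i \<le> j" "j < length xs"
  shows "xs ! i + (j - i) \<le> xs ! j"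
  using assms(2,3)
proof (induction j rule: dec_induct)
  case (step j)
  then have "xs ! j < xs ! Suc j"
    using assms(1) by (simp add: sorted_wrt_iff_nth_less)
  with step show ?case by simp
qed simp

lemma Idn_nth_lower:
  assumes "xs \<in> Idn d n" "k < d"
  shows "Suc k \<le> xs ! k"
proof -
  have "xs ! 0 + k \<le> xs ! k" "1 \<le> xs ! 0"
    using sorted_wrt_less_nth_gap[of xs 0 k] Idn_nth_range[of xs d n 0] assms
    by (auto simp: Idn_def)
  then show ?thesis by simp
qed

lemma Idn_nth_upper:
  assumes "xs \<in> Idn d n" "k < d"
  shows "xs ! k + d \<le> n + Suc k"
proof -
  have "xs ! k + (d - 1 - k) \<le> xs ! (d - 1)" "xs ! (d - 1) \<le> n"
    using sorted_wrt_less_nth_gap[of xs k "d - 1"] Idn_nth_range[of xs d n "d - 1"] assms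
    by (auto simp: Idn_def)
  with assms(2) show ?thesis by simp
qed

lemma Idn_mem_iff_last:
  assumes "xs \<in> Idn d n" "0 < d"
  shows "n \<in> set xs \<longleftrightarrow> xs ! (d - 1) = n"
proof
  assume "n \<in> set xs"
  then obtain k where k: "k < d" "xs ! k = n"
    using assms(1) by (auto simp: Idn_def in_set_conv_nth)
  with Idn_nth_upper[OF assms(1) k(1)] have "k = d - 1" by simp
  with k show "xs ! (d - 1) = n" by simp
next
  assume "xs ! (d - 1) = n"
  then show "n \<in> set xs"
    using assms nth_mem[of "d - 1" xs] by (simp add: length_Idn)
qed

lemma leI_refl: "leI xs xs"
  by (simp add: leI_def)

lemma leI_trans: "leI xs ys \<Longrightarrow> leI ys zs \<Longrightarrow> leI xs zs"
  unfolding leI_def by (metis order_trans)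

lemma leI_list_update: "xs ! k \<le> y \<Longrightarrow> leI xs (xs[k := y])"
  unfolding leI_def by (cases "k < length xs") (auto simp: nth_list_update)

lemma leI_sum_list_less:
  assumes "leI xs ys" "xs \<noteq> ys"
  shows "sum_list xs < sum_list ys"
proof -
  have len: "length xs = length ys" and le: "\<forall>k<length xs. xs ! k \<le> ys ! k"
    using assms(1) by (auto simp: leI_def)
  obtain k where "k < length xs" "xs ! k \<noteq> ys ! k"
    using assms(2) len nth_equalityI by blast
  with le have "(\<Sum>k<length xs. xs ! k) < (\<Sum>k<length xs. ys ! k)"
    by (intro sum_strict_mono_ex1) (auto intro!: bexI[of _ k])
  then show ?thesis
    by (simp add: sum_list_sum_nth atLeast0LessThan len)
qed

lemma leI_sum_list: "leI xs ys \<Longrightarrow> sum_list xs \<le> sum_list ys"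
  using leI_sum_list_less[of xs ys] by (cases "xs = ys") auto

lemma leI_antisym_sum_list: "leI xs ys \<Longrightarrow> sum_list ys \<le> sum_list xs \<Longrightarrow> xs = ys"
  using leI_sum_list_less by fastforce

lemma leI_sum_list_Suc_imp_incr_nth:
  assumes "leI xs ys" "sum_list ys = Suc (sum_list xs)"
  shows "\<exists>k<length xs. ys = incr_nth xs k"
proof -
  have len: "length xs = length ys" and le: "\<forall>k<length xs. xs ! k \<le> ys ! k"
    using assms(1) by (auto simp: leI_def)
  obtain k where k: "k < length xs" "xs ! k \<noteq> ys ! k"
    using assms(2) len nth_equalityI by force
  have "leI (incr_nth xs k) ys"
    using le k len by (auto simp: leI_def nth_incr_nth)
  moreover have "sum_list ys \<le> sum_list (incr_nth xs k)"
    using assms(2) k(1) by (simp add: sum_list_incr_nth)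
  ultimately show ?thesis
    using k(1) leI_antisym_sum_list by blast
qed

lemma root_op_leI: "root_op d s h (Some xs) = Some ys \<Longrightarrow> leI xs ys"
  by (auto intro: leI_list_update split: if_splits)

lemma apply_monomial_append [simp]:
  "apply_monomial d (ms @ ms') x = apply_monomial d ms (apply_monomial d ms' x)"
  by (induction ms) auto

lemma apply_monomial_leI: "apply_monomial d ms (Some xs) = Some ys \<Longrightarrow> leI xs ys"
proof (induction ms arbitrary: ys)
  case (Cons m ms)
  obtain s h where "m = (s, h)" by force
  with Cons.prems obtain zs
    where "apply_monomial d ms (Some xs) = Some zs" "root_op d s h (Some zs) = Some ys"
    by (cases "apply_monomial d ms (Some xs)") auto
  then show ?case
    using Cons.IH root_op_leI leI_trans by blast
qed (simp add: leI_refl)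

lemma root_op_incr_nth:
  assumes xs: "xs \<in> Idn d n" and ys: "incr_nth xs k \<in> Idn d n" and k: "k < d"
  shows "root_valid d n (xs ! k) (Suc k) \<and> root_op d (xs ! k) (Suc k) (Some xs) = Some (incr_nth xs k)"
proof
  have len: "length xs = d" using length_Idn[OF xs] .
  show "root_valid d n (xs ! k) (Suc k)"
    using Idn_nth_lower[OF xs k] Idn_nth_upper[OF ys k] k len
    unfolding root_valid_def by (simp add: nth_incr_nth)
  have "Suc k = d \<or> Suc (Suc (xs ! k)) \<le> xs ! Suc k"
  proof (cases "Suc k = d")
    case False
    then have "incr_nth xs k ! k < incr_nth xs k ! Suc k"
      using ys k by (simp add: Idn_iff_nth)
    then show ?thesis using k len by (simp add: nth_incr_nth)
  qed simp
  then show "root_op d (xs ! k) (Suc k) (Some xs) = Some (incr_nth xs k)"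
    by (auto simp: incr_nth_def)
qed

lemma leI_exists_incr_nth:
  assumes i: "i \<in> Idn d n" and j: "j \<in> Idn d n" and "leI i j" "i \<noteq> j"
  shows "\<exists>k<d. incr_nth i k \<in> Idn d n \<and> leI (incr_nth i k) j"
proof -
  have len: "length i = d" "length j = d" using length_Idn i j by auto
  have le: "\<And>a. a < d \<Longrightarrow> i ! a \<le> j ! a" using \<open>leI i j\<close> len by (auto simp: leI_def)
  define K where "K = {k. k < d \<and> i ! k < j ! k}"
  obtain a where "a < d" "i ! a \<noteq> j ! a"
    using \<open>i \<noteq> j\<close> len nth_equalityI by force
  with le have "a \<in> K" unfolding K_def by (simp add: le_neq_implies_less)
  moreover have "finite K" unfolding K_def by simp
  ultimately have "Max K \<in> K" and K_le_Max: "\<And>a. a \<in> K \<Longrightarrow> a \<le> Max K"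
    by (auto intro: Max_in)
  define k where "k = Max K"
  define i' where "i' = incr_nth i k"
  have k: "k < d" "i ! k < j ! k" using \<open>Max K \<in> K\<close> unfolding k_def K_def by auto
  have i'_nth: "\<And>a. i' ! a = (if a = k then Suc (i ! k) else i ! a)"
    using k len unfolding i'_def by (simp add: nth_incr_nth)
  have i'_le_j: "\<And>a. a < d \<Longrightarrow> i' ! a \<le> j ! a"
    using k le i'_nth by simp
  have i'_eq_j: "i' ! b = j ! b" if "k < b" "b < d" for b
  proof -
    have "b \<notin> K" using K_le_Max[of b] \<open>k < b\<close> unfolding k_def by linarith
    with le[of b] \<open>b < d\<close> have "i ! b = j ! b" unfolding K_def by simp
    with \<open>k < b\<close> show ?thesis using i'_nth by simp
  qed
  have "i' \<in> Idn d n"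
    unfolding Idn_iff_nth
  proof (intro conjI allI impI)
    show "length i' = d" using len by (simp add: i'_def)
  next
    fix a b assume "a < b" "b < d"
    show "i' ! a < i' ! b"
    proof (cases "k < b")
      case True
      have "i' ! a \<le> j ! a" using i'_le_j \<open>a < b\<close> \<open>b < d\<close> by simp
      also have "j ! a < j ! b" using j \<open>a < b\<close> \<open>b < d\<close> by (simp add: Idn_iff_nth)
      also have "\<dots> = i' ! b" using i'_eq_j True \<open>b < d\<close> by simp
      finally show ?thesis .
    next
      case False
      with \<open>a < b\<close> have "i' ! a = i ! a" using i'_nth by simp
      also have "i ! a < i ! b" using i \<open>a < b\<close> \<open>b < d\<close> by (simp add: Idn_iff_nth)
      also have "\<dots> \<le> i' ! b" using i'_nth by simp
      finally show ?thesis .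
    qed
  next
    fix a assume "a < d"
    then show "1 \<le> i' ! a" "i' ! a \<le> n"
      using Idn_nth_range[OF i] Idn_nth_range[OF j] i'_le_j i'_nth
      by (fastforce split: if_splits)+
  qed
  moreover have "leI i' j" using i'_le_j len by (simp add: leI_def i'_def)
  ultimately show ?thesis using k unfolding i'_def by blast
qed

lemma leI_imp_monomial:
  assumes "i \<in> Idn d n" "j \<in> Idn d n" "leI i j"
  shows "\<exists>ms. (\<forall>(s, h)\<in>set ms. root_valid d n s h) \<and> apply_monomial d ms (Some i) = Some j"
  using assms
proof (induction "sum_list j - sum_list i" arbitrary: i rule: less_induct)
  case less
  show ?case
  proof (cases "i = j")
    case True
    then show ?thesis by (intro exI[of _ "[]"]) simp
  next
    case False
    then obtain k where k: "k < d" and i': "incr_nth i k \<in> Idn d n" "leI (incr_nth i k) j"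
      using leI_exists_incr_nth less.prems by blast
    have "length i = d" using length_Idn[OF less.prems(1)] .
    with k have "sum_list (incr_nth i k) = Suc (sum_list i)" by (simp add: sum_list_incr_nth)
    moreover have "sum_list (incr_nth i k) \<le> sum_list j" using leI_sum_list[OF i'(2)] .
    ultimately have "sum_list j - sum_list (incr_nth i k) < sum_list j - sum_list i" by simp
    with less.hyps i' less.prems(2) obtain ms where
      ms: "\<forall>(s, h)\<in>set ms. root_valid d n s h" "apply_monomial d ms (Some (incr_nth i k)) = Some j"
      by blast
    have "root_valid d n (i ! k) (Suc k)" "root_op d (i ! k) (Suc k) (Some i) = Some (incr_nth i k)"
      using root_op_incr_nth[OF less.prems(1) i'(1) k] by auto
    with ms show ?thesis
      by (intro exI[of _ "ms @ [(i ! k, Suc k)]"]) auto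
  qed
qed

lemma leI_iff_monomial:
  assumes "i \<in> Idn d n" "j \<in> Idn d n"
  shows "leI i j \<longleftrightarrow>
    (\<exists>ms. (\<forall>(s, h)\<in>set ms. root_valid d n s h) \<and> apply_monomial d ms (Some i) = Some j)"
  using leI_imp_monomial[OF assms] apply_monomial_leI by blast

lemma unit_increments_cross_once:
  fixes v :: "nat \<Rightarrow> nat"
  assumes step: "\<And>t. t \<in> {1..r} \<Longrightarrow> v t = v (t - 1) + (if P t then 1 else 0)"
    and "v 0 \<le> s" "s < v r"
  shows "\<exists>!t. t \<in> {1..r} \<and> P t \<and> v (t - 1) = s"
proof -
  have mono: "v a \<le> v b" if "a \<le> b" "b \<le> r" for a b
  proof (rule lift_Suc_mono_le_ivl[where f = v and N = "{..<r}"])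
    show "v m \<le> v (Suc m)" if "m \<in> {..<r}" for m
      using step[of "Suc m"] that by simp
  qed (use that in auto)
  define t0 where "t0 = (LEAST t. s < v t)"
  have "s < v t0"
    unfolding t0_def by (rule LeastI) (rule \<open>s < v r\<close>)
  have "t0 \<le> r"
    unfolding t0_def by (rule Least_le) (rule \<open>s < v r\<close>)
  have "t0 \<noteq> 0"
    using \<open>s < v t0\<close> \<open>v 0 \<le> s\<close> by (cases t0) auto
  have "\<not> s < v (t0 - 1)"
    using not_less_Least[of "t0 - 1" "\<lambda>t. s < v t"] \<open>t0 \<noteq> 0\<close> by (simp add: t0_def)
  then have t0: "t0 \<in> {1..r} \<and> P t0 \<and> v (t0 - 1) = s"
    using step[of t0] \<open>s < v t0\<close> \<open>t0 \<le> r\<close> \<open>t0 \<noteq> 0\<close> by (auto split: if_splits)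
  have later: "\<not> (t1 \<in> {1..r} \<and> P t1 \<and> v (t1 - 1) = s)"
    if "t2 \<in> {1..r}" "P t2" "v (t2 - 1) = s" "t2 < t1" for t1 t2
  proof
    assume t1: "t1 \<in> {1..r} \<and> P t1 \<and> v (t1 - 1) = s"
    have "v t2 = Suc s" using step[of t2] that by simp
    moreover have "v t2 \<le> v (t1 - 1)" using mono[of t2 "t1 - 1"] that t1 by auto
    ultimately show False using t1 by simp
  qed
  show ?thesis
  proof (rule ex1I[of _ t0])
    show "t0 \<in> {1..r} \<and> P t0 \<and> v (t0 - 1) = s" by (rule t0)
    fix t assume t: "t \<in> {1..r} \<and> P t \<and> v (t - 1) = s"
    show "t = t0"
    proof (rule linorder_cases[of t t0])
      assume "t < t0" then show ?thesis using later[of t t0] t t0 by blast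
    next
      assume "t0 < t" then show ?thesis using later[of t0 t] t t0 by blast
    qed
  qed
qed

definition Idn_bot :: "nat \<Rightarrow> nat list" where
  "Idn_bot d = [1..<Suc d]"

definition Idn_top :: "nat \<Rightarrow> nat \<Rightarrow> nat list" where
  "Idn_top d n = [Suc (n - d)..<Suc n]"

lemma length_Idn_bot [simp]: "length (Idn_bot d) = d"
  by (simp add: Idn_bot_def)

lemma length_Idn_top [simp]: "d \<le> n \<Longrightarrow> length (Idn_top d n) = d"
  by (simp add: Idn_top_def del: upt_Suc)

lemma nth_Idn_bot: "k < d \<Longrightarrow> Idn_bot d ! k = Suc k"
  by (simp add: Idn_bot_def nth_upt del: upt_Suc)

lemma nth_Idn_top: "d \<le> n \<Longrightarrow> k < d \<Longrightarrow> Idn_top d n ! k = Suc (n - d + k)"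
  by (simp add: Idn_top_def nth_upt del: upt_Suc)

lemma Idn_bot_leI: "xs \<in> Idn d n \<Longrightarrow> leI (Idn_bot d) xs"
  using Idn_nth_lower[of xs d n] length_Idn[of xs d n] by (simp add: leI_def nth_Idn_bot)

lemma leI_Idn_top:
  assumes "d \<le> n" "xs \<in> Idn d n"
  shows "leI xs (Idn_top d n)"
proof -
  have "xs ! k \<le> Suc (n - d + k)" if "k < d" for k
    using Idn_nth_upper[OF assms(2) that] assms(1) by linarith
  then show ?thesis
    using assms by (simp add: leI_def nth_Idn_top length_Idn)
qed

lemma sum_list_Idn_top:
  assumes "d \<le> n"
  shows "sum_list (Idn_top d n) = sum_list (Idn_bot d) + d * (n - d)"
proof -
  have "sum_list (Idn_top d n) = (\<Sum>k<d. Idn_top d n ! k)"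
    using assms by (simp add: sum_list_sum_nth atLeast0LessThan)
  also have "\<dots> = (\<Sum>k<d. Idn_bot d ! k + (n - d))"
    using assms by (intro sum.cong) (simp_all add: nth_Idn_top nth_Idn_bot)
  also have "\<dots> = sum_list (Idn_bot d) + d * (n - d)"
    by (simp add: sum.distrib sum_list_sum_nth atLeast0LessThan)
  finally show ?thesis .
qed

locale saturated_chain =
  fixes d n r :: nat and c :: "nat \<Rightarrow> nat list"
  assumes d_le_n: "d \<le> n" and r_eq: "r = d * (n - d)"
    and chain_Idn: "t \<le> r \<Longrightarrow> c t \<in> Idn d n"
    and chain_leI: "t \<in> {1..r} \<Longrightarrow> leI (c (t - 1)) (c t)"
    and chain_neq: "t \<in> {1..r} \<Longrightarrow> c (t - 1) \<noteq> c t"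
begin

lemma sum_list_chain_gap: "a \<le> b \<Longrightarrow> b \<le> r \<Longrightarrow> sum_list (c a) + (b - a) \<le> sum_list (c b)"
proof (induction b rule: dec_induct)
  case (step b)
  then have "sum_list (c b) < sum_list (c (Suc b))"
    using chain_leI[of "Suc b"] chain_neq[of "Suc b"] leI_sum_list_less by simp
  with step show ?case by simp
qed simp

lemma chain_first: "c 0 = Idn_bot d" and chain_last: "c r = Idn_top d n"
proof -
  have "sum_list (Idn_bot d) \<le> sum_list (c 0)"
    using leI_sum_list[OF Idn_bot_leI[OF chain_Idn]] by simp
  moreover have "sum_list (c 0) + r \<le> sum_list (c r)"
    using sum_list_chain_gap[of 0 r] by simp
  moreover have "sum_list (c r) \<le> sum_list (Idn_top d n)"
    using leI_sum_list[OF leI_Idn_top[OF d_le_n chain_Idn]] by simp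
  moreover have "sum_list (Idn_top d n) = sum_list (Idn_bot d) + r"
    using sum_list_Idn_top[OF d_le_n] r_eq by simp
  ultimately have "sum_list (c 0) \<le> sum_list (Idn_bot d)" "sum_list (Idn_top d n) \<le> sum_list (c r)"
    by linarith+
  then show "c 0 = Idn_bot d" "c r = Idn_top d n"
    using leI_antisym_sum_list[OF Idn_bot_leI[OF chain_Idn[of 0]]]
      leI_antisym_sum_list[OF leI_Idn_top[OF d_le_n chain_Idn[of r]]] by auto
qed

lemma sum_list_chain:
  assumes "t \<le> r"
  shows "sum_list (c t) = sum_list (Idn_bot d) + t"
proof -
  have "sum_list (c r) = sum_list (Idn_bot d) + r"
    by (simp add: chain_last sum_list_Idn_top[OF d_le_n, folded r_eq])
  then show ?thesis
    using sum_list_chain_gap[of 0 t] sum_list_chain_gap[of t r] assms by (simp add: chain_first)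
qed

definition step_pos :: "nat \<Rightarrow> nat" where
  "step_pos t = (SOME k. k < d \<and> c t = incr_nth (c (t - 1)) k)"

lemma step_pos:
  assumes "t \<in> {1..r}"
  shows "step_pos t < d \<and> c t = incr_nth (c (t - 1)) (step_pos t)"
proof -
  have "sum_list (c (t - 1)) = sum_list (Idn_bot d) + (t - 1)"
    using assms by (intro sum_list_chain) auto
  moreover have "sum_list (c t) = sum_list (Idn_bot d) + t"
    using assms by (intro sum_list_chain) auto
  ultimately have "sum_list (c t) = Suc (sum_list (c (t - 1)))"
    using assms by simp
  then have "\<exists>k<d. c t = incr_nth (c (t - 1)) k"
    using leI_sum_list_Suc_imp_incr_nth chain_leI length_Idn chain_Idn assms by fastforce
  then show ?thesis
    unfolding step_pos_def by (rule someI_ex)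
qed

lemma nth_chain_step:
  assumes "t \<in> {1..r}" "k < d"
  shows "c t ! k = c (t - 1) ! k + (if step_pos t = k then 1 else 0)"
proof -
  have "length (c (t - 1)) = d"
    using assms by (intro length_Idn[where n = n] chain_Idn) auto
  then show ?thesis
    using step_pos[OF assms(1)] assms(2) by (simp add: nth_incr_nth)
qed

lemma chain_root_op:
  assumes "t \<in> {1..r}"
  shows "root_valid d n (c (t - 1) ! step_pos t) (Suc (step_pos t))
    \<and> Some (c t) = root_op d (c (t - 1) ! step_pos t) (Suc (step_pos t)) (Some (c (t - 1)))"
proof -
  have k: "step_pos t < d" and ct: "c t = incr_nth (c (t - 1)) (step_pos t)"
    using step_pos[OF assms] by auto
  have "c (t - 1) \<in> Idn d n"
    using assms by (intro chain_Idn) auto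
  moreover have "incr_nth (c (t - 1)) (step_pos t) \<in> Idn d n"
    unfolding ct[symmetric] using assms by (intro chain_Idn) auto
  ultimately show ?thesis
    using root_op_incr_nth[OF _ _ k]
    by (simp add: ct del: root_op.simps)
qed

lemma chain_root_op_once:
  assumes "root_valid d n s h"
  shows "\<exists>!t. t \<in> {1..r} \<and> c (t - 1) ! step_pos t = s \<and> Suc (step_pos t) = h"
proof -
  define k where "k = h - 1"
  have k: "k < d" "h = Suc k" using assms unfolding root_valid_def k_def by auto
  have "\<exists>!t. t \<in> {1..r} \<and> step_pos t = k \<and> c (t - 1) ! k = s"
  proof (rule unit_increments_cross_once)
    show "c t ! k = c (t - 1) ! k + (if step_pos t = k then 1 else 0)" if "t \<in> {1..r}" for t
      using nth_chain_step[OF that k(1)] .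
    show "c 0 ! k \<le> s" "s < c r ! k"
      using assms k d_le_n by (auto simp: chain_first chain_last nth_Idn_bot nth_Idn_top root_valid_def)
  qed
  moreover have "(c (t - 1) ! step_pos t = s \<and> Suc (step_pos t) = h)
      \<longleftrightarrow> (step_pos t = k \<and> c (t - 1) ! k = s)" for t
    using k(2) by auto
  ultimately show ?thesis by simp
qed

lemma chain_step_reaching_n:
  assumes "0 < d" "d < n"
    and outside: "\<forall>k\<in>{1..t}. n \<notin> set (c k)" and inside: "\<forall>k. t < k \<and> k \<le> r \<longrightarrow> n \<in> set (c k)"
  shows "Some (c (t + 1)) = root_op d (n - 1) d (Some (c t))"
proof -
  have "0 < r" using assms r_eq by simp
  have "n \<in> set (c r)"
    using chain_last assms nth_Idn_top Idn_mem_iff_last[OF chain_Idn[of r]] by simp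
  then have "t < r" using outside \<open>0 < r\<close> by (cases "t < r") auto
  then have Suc_t: "Suc t \<in> {1..r}" by simp
  have "c (Suc t) ! (d - 1) = n"
    using inside \<open>t < r\<close> Idn_mem_iff_last[OF chain_Idn assms(1)] by simp
  moreover have "c t ! (d - 1) \<noteq> n"
  proof (cases "t = 0")
    case True
    then show ?thesis using assms by (simp add: chain_first nth_Idn_bot)
  next
    case False
    then show ?thesis
      using outside \<open>t < r\<close> Idn_mem_iff_last[OF chain_Idn assms(1)] by simp
  qed
  ultimately have "step_pos (Suc t) = d - 1" "c t ! (d - 1) = n - 1"
    using nth_chain_step[OF Suc_t, of "d - 1"] assms by (auto split: if_splits)
  then show ?thesis
    using chain_root_op[OF Suc_t] assms(1) by simp
qed

end

theorem proposition2p14: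
  fixes d n r :: nat
  assumes "1 \<le> d" and "d < n" and "r = d * (n - d)"
  shows
   "(\<forall>i\<in>Idn d n. \<forall>j\<in>Idn d n.
        leI i j \<longleftrightarrow>
        (\<exists>ms. (\<forall>(s, h)\<in>set ms. root_valid d n s h) \<and> apply_monomial d ms (Some i) = Some j))
    \<and>
    (\<forall>c :: nat \<Rightarrow> nat list.
       (\<forall>t\<in>{1..r}. leI (c (t - 1)) (c t) \<and> c (t - 1) \<noteq> c t) \<and>
       is_maximal_chain d n (c ` {0..r}) \<longrightarrow>
       (\<exists>sf hf :: nat \<Rightarrow> nat.
          (\<forall>t\<in>{1..r}. root_valid d n (sf t) (hf t) \<and>
                        Some (c t) = root_op d (sf t) (hf t) (Some (c (t - 1))))
        \<and> (\<forall>s h. 1 \<le> s \<and> s \<le> n - 1 \<and> 1 \<le> h \<and> h \<le> d \<and> s < n - d + h \<and> h \<le> s \<longrightarrow>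
                 (\<exists>!t. t \<in> {1..r} \<and> sf t = s \<and> hf t = h)))
       \<and>
       (\<forall>t. (\<forall>k\<in>{1..t}. n \<notin> set (c k)) \<and> (\<forall>k. t < k \<and> k \<le> r \<longrightarrow> n \<in> set (c k)) \<longrightarrow>
            Some (c (t + 1)) = root_op d (n - 1) d (Some (c t))))"
proof (intro conjI allI impI)
  show "\<forall>i\<in>Idn d n. \<forall>j\<in>Idn d n. leI i j \<longleftrightarrow>
      (\<exists>ms. (\<forall>(s, h)\<in>set ms. root_valid d n s h) \<and> apply_monomial d ms (Some i) = Some j)"
    using leI_iff_monomial by blast
next
  fix c :: "nat \<Rightarrow> nat list"
  assume chain: "(\<forall>t\<in>{1..r}. leI (c (t - 1)) (c t) \<and> c (t - 1) \<noteq> c t)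
    \<and> is_maximal_chain d n (c ` {0..r})"
  interpret saturated_chain d n r c
    using chain assms by unfold_locales (auto simp: is_maximal_chain_def is_chain_def)
  show "\<exists>sf hf. (\<forall>t\<in>{1..r}. root_valid d n (sf t) (hf t) \<and>
                        Some (c t) = root_op d (sf t) (hf t) (Some (c (t - 1))))
        \<and> (\<forall>s h. 1 \<le> s \<and> s \<le> n - 1 \<and> 1 \<le> h \<and> h \<le> d \<and> s < n - d + h \<and> h \<le> s \<longrightarrow>
                 (\<exists>!t. t \<in> {1..r} \<and> sf t = s \<and> hf t = h))"
    using chain_root_op chain_root_op_once
    by (intro exI[of _ "\<lambda>t. c (t - 1) ! step_pos t"] exI[of _ "\<lambda>t. Suc (step_pos t)"])
      (auto simp: root_valid_def)
  fix t
  assume "(\<forall>k\<in>{1..t}. n \<notin> set (c k)) \<and> (\<forall>k. t < k \<and> k \<le> r \<longrightarrow> n \<in> set (c k))"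
  then show "Some (c (t + 1)) = root_op d (n - 1) d (Some (c t))"
    using chain_step_reaching_n assms by auto
qed

end
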